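(* (i) $(I(\mathbb N),\tau_1)$ is a Polish topological semigroup, and $\rho$ is a complete metric compatible with $\tau_1$. (ii) $(I(\mathbb N),\tau_2)$ is a Polish topological semigroup, and $\rho^\ast$ is a complete metric compatible with $\tau_2$.
   Context: $I(\mathbb N)$ is the set of all bijections $f:A\to B$ with $A,B\subseteq\mathbb N$ (including the empty map), $\mathrm{dom}(f)=A$, $\mathrm{im}(f)=B$, under composition ($\mathrm{dom}(f\circ g)=g^{-1}(\mathrm{dom}(f)\cap\mathrm{im}(g))$). For $x,y$: $v(x,y)=\{f: x\in\mathrm{dom}(f), f(x)=y\}$, $w_1(x)=\{f: x\notin\mathrm{dom}(f)\}$, $w_2(y)=\{f: y\notin\mathrm{im}(f)\}$. $\tau_1$ is the topology generated by all $v(x,y)$, $w_1(x)$; $\tau_2$ by all $v(x,y)$, $w_2(y)$. For $f,g\in I(\mathbb N)$ and $n\in\mathbb N$ let $a_{(f,g)}(n)=0$ if $n\in\mathrm{dom}(f)\cap\mathrm{dom}(g)$ or $n\notin\mathrm{dom}(f)\cup\mathrm{dom}(g)$, and $a_{(f,g)}(n)=1$ otherwise; let $b_{(f,g)}(n)=\min\{1,|f(n)-g(n)|\}$ if $n\in\mathrm{dom}(f)\cap\mathrm{dom}(g)$ and $0$ otherwise. Define $\rho(f,g)=\sum_{n\in\mathbb N}\frac{a_{(f,g)}(n)+b_{(f,g)}(n)}{2^n}$ and $\rho^\ast(f,g)=\rho(f^{-1},g^{-1})$. *)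

theory Defs
  imports "HOL-Analysis.Analysis"
begin

definition Inat :: "(nat \<rightharpoonup> nat) set" where
  "Inat = {f. inj_on f (dom f)}"

text \<open>Composition: map_comp f g (apply g first, then f), i.e. f after g.\<close>

definition pinv :: "(nat \<rightharpoonup> nat) \<Rightarrow> (nat \<rightharpoonup> nat)" where
  "pinv f = (\<lambda>y. if y \<in> ran f then Some (THE x. f x = Some y) else None)"

definition vset :: "nat \<Rightarrow> nat \<Rightarrow> (nat \<rightharpoonup> nat) set" where
  "vset x y = {f \<in> Inat. f x = Some y}"

definition w1set :: "nat \<Rightarrow> (nat \<rightharpoonup> nat) set" where
  "w1set x = {f \<in> Inat. x \<notin> dom f}"

definition w2set :: "nat \<Rightarrow> (nat \<rightharpoonup> nat) set" where
  "w2set y = {f \<in> Inat. y \<notin> ran f}"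

definition tau1 :: "(nat \<rightharpoonup> nat) topology" where
  "tau1 = topology_generated_by ({vset x y | x y. True} \<union> {w1set x | x. True})"

definition tau2 :: "(nat \<rightharpoonup> nat) topology" where
  "tau2 = topology_generated_by ({vset x y | x y. True} \<union> {w2set y | y. True})"

definition acoef :: "(nat \<rightharpoonup> nat) \<Rightarrow> (nat \<rightharpoonup> nat) \<Rightarrow> nat \<Rightarrow> real" where
  "acoef f g n = (if (n \<in> dom f \<and> n \<in> dom g) \<or> (n \<notin> dom f \<union> dom g) then 0 else 1)"

definition bcoef :: "(nat \<rightharpoonup> nat) \<Rightarrow> (nat \<rightharpoonup> nat) \<Rightarrow> nat \<Rightarrow> real" where
  "bcoef f g n = (if n \<in> dom f \<and> n \<in> dom g
      then min 1 \<bar>real (the (f n)) - real (the (g n))\<bar> else 0)"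

definition rho :: "(nat \<rightharpoonup> nat) \<Rightarrow> (nat \<rightharpoonup> nat) \<Rightarrow> real" where
  "rho f g = (\<Sum>n. (acoef f g n + bcoef f g n) / 2 ^ n)"

definition rho_star :: "(nat \<rightharpoonup> nat) \<Rightarrow> (nat \<rightharpoonup> nat) \<Rightarrow> real" where
  "rho_star f g = rho (pinv f) (pinv g)"

definition Polish_space :: "'a topology \<Rightarrow> bool" where
  "Polish_space X \<longleftrightarrow> completely_metrizable_space X \<and> separable_space X"

definition topological_semigroup :: "'a topology \<Rightarrow> ('a \<Rightarrow> 'a \<Rightarrow> 'a) \<Rightarrow> bool" where
  "topological_semigroup X m \<longleftrightarrow>
     (\<forall>a\<in>topspace X. \<forall>b\<in>topspace X. \<forall>c\<in>topspace X. m (m a b) c = m a (m b c)) \<and>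
     continuous_map (prod_topology X X) X (\<lambda>(a, b). m a b)"

end

theory Submission
  imports Defs
begin

(* Identify a partial bijection f with its sequence of values (f 0, f 1, ...) in the countable
   product of the discrete space nat option. The summand of rho is exactly [f n \<noteq> g n] / 2^n,
   so rho is the pull-back of the usual complete metric of this product, whose cylinders
   {f. f n = c} are precisely the sets v(n, y) and w1(n). I(N) is closed under eventual pointwise
   limits and finite restrictions of its elements are dense, hence tau1 is Polish. Inversion is an
   involution of I(N) carrying rho to rho* and the cylinders to the sets v(x, y) and w2(y), which
   gives the same for tau2. Composition is continuous because the preimage of each subbasic set
   is a union of open rectangles; e.g. f \<circ> g \<in> v(x, y) iff f \<in> v(m, y) and g \<in> v(x, m) for some m,
   and f \<circ> g \<in> w2(y) iff f \<in> w2(y), or f \<in> v(m, y) and g \<in> w2(m) for some m. *)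

definition coord_diff :: "(nat \<Rightarrow> 'a) \<Rightarrow> (nat \<Rightarrow> 'a) \<Rightarrow> nat \<Rightarrow> real" where
  "coord_diff u v n = (if u n = v n then 0 else 1) / 2 ^ n"

definition coord_dist :: "(nat \<Rightarrow> 'a) \<Rightarrow> (nat \<Rightarrow> 'a) \<Rightarrow> real" where
  "coord_dist u v = (\<Sum>n. coord_diff u v n)"

lemma coord_diff_nonneg: "0 \<le> coord_diff u v n"
  by (simp add: coord_diff_def)

lemma summable_coord_diff: "summable (coord_diff u v)"
proof (rule summable_comparison_test)
  show "\<exists>N. \<forall>n\<ge>N. norm (coord_diff u v n) \<le> (1/2) ^ n"
    by (simp add: coord_diff_def power_divide)
qed (rule summable_geometric, simp)

lemma coord_dist_nonneg: "0 \<le> coord_dist u v"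
  unfolding coord_dist_def by (intro suminf_nonneg summable_coord_diff coord_diff_nonneg)

lemma coord_dist_commute: "coord_dist u v = coord_dist v u"
proof -
  have "coord_diff u v = coord_diff v u"
    by (auto simp: coord_diff_def fun_eq_iff)
  then show ?thesis by (simp add: coord_dist_def)
qed

lemma coord_dist_eq_0_iff: "coord_dist u v = 0 \<longleftrightarrow> u = v"
proof
  assume "coord_dist u v = 0"
  then have "\<forall>n. coord_diff u v n = 0"
    by (simp add: coord_dist_def suminf_eq_zero_iff[OF summable_coord_diff coord_diff_nonneg])
  then show "u = v"
    by (auto simp: coord_diff_def fun_eq_iff split: if_splits)
qed (simp add: coord_dist_def coord_diff_def)

lemma coord_dist_triangle: "coord_dist u w \<le> coord_dist u v + coord_dist v w"
proof -
  have "coord_dist u w \<le> (\<Sum>n. coord_diff u v n + coord_diff v w n)"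
    unfolding coord_dist_def
    by (intro suminf_le summable_add summable_coord_diff)
       (auto simp: coord_diff_def intro!: divide_right_mono)
  also have "\<dots> = coord_dist u v + coord_dist v w"
    unfolding coord_dist_def by (intro suminf_add[symmetric] summable_coord_diff)
  finally show ?thesis .
qed

lemma coord_dist_ge_if_differ:
  assumes "u n \<noteq> v n"
  shows "1 / 2 ^ n \<le> coord_dist u v"
proof -
  have "sum (coord_diff u v) {n} \<le> coord_dist u v"
    unfolding coord_dist_def
    by (intro sum_le_suminf summable_coord_diff) (auto simp: coord_diff_nonneg)
  then show ?thesis
    using assms by (simp add: coord_diff_def)
qed

lemma coord_dist_le_if_agree:
  assumes "\<And>n. n < N \<Longrightarrow> u n = v n"
  shows "coord_dist u v \<le> 2 / 2 ^ N"
proof -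
  have "coord_dist u v = (\<Sum>n. coord_diff u v (n + N)) + (\<Sum>n<N. coord_diff u v n)"
    unfolding coord_dist_def by (rule suminf_split_initial_segment[OF summable_coord_diff])
  also have "(\<Sum>n<N. coord_diff u v n) = 0"
    using assms by (simp add: coord_diff_def)
  also have "(\<Sum>n. coord_diff u v (n + N)) \<le> (\<Sum>n. (1/2) ^ N * (1/2::real) ^ n)"
  proof (rule suminf_le)
    show "summable (\<lambda>n. coord_diff u v (n + N))"
      by (rule summable_ignore_initial_segment[OF summable_coord_diff])
    show "summable (\<lambda>n. (1/2) ^ N * (1/2::real) ^ n)"
      by (intro summable_mult summable_geometric) simp
    show "coord_diff u v (n + N) \<le> (1/2) ^ N * (1/2) ^ n" for n
      by (simp add: coord_diff_def power_add power_divide mult.commute)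
  qed
  also have "(\<Sum>n. (1/2) ^ N * (1/2::real) ^ n) = 2 / 2 ^ N"
    by (subst suminf_mult) (simp_all add: summable_geometric suminf_geometric power_divide)
  finally show ?thesis by simp
qed

lemma coord_dist_small:
  assumes "r > 0"
  obtains N where "N > 0" "\<And>u v. (\<And>n. n < N \<Longrightarrow> u n = v n) \<Longrightarrow> coord_dist u v < r"
proof -
  obtain n where "(1/2::real) ^ n < r"
    using real_arch_pow_inv[of r "1/2"] assms by auto
  then have small: "2 / 2 ^ Suc n < r"
    by (simp add: power_divide)
  show thesis
  proof (rule that[of "Suc n"])
    fix u v :: "nat \<Rightarrow> 'a"
    assume "\<And>m. m < Suc n \<Longrightarrow> u m = v m"
    then show "coord_dist u v < r"
      using coord_dist_le_if_agree small by (meson order_le_less_trans)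
  qed simp
qed

definition pullback_dist :: "('b \<Rightarrow> nat \<Rightarrow> 'a) \<Rightarrow> 'b \<Rightarrow> 'b \<Rightarrow> real" where
  "pullback_dist T f g = coord_dist (T f) (T g)"

definition cylinders :: "'b set \<Rightarrow> ('b \<Rightarrow> nat \<Rightarrow> 'a) \<Rightarrow> 'b set set" where
  "cylinders A T = {{f \<in> A. T f n = c} | n c. True}"

definition pointwise_closed :: "(nat \<Rightarrow> 'a) set \<Rightarrow> bool" where
  "pointwise_closed B \<longleftrightarrow>
     (\<forall>\<sigma> h. (\<forall>k. \<sigma> k \<in> B) \<longrightarrow> (\<forall>n. \<forall>\<^sub>F k in sequentially. \<sigma> k n = h n) \<longrightarrow> h \<in> B)"

lemma pointwise_closedD:
  "pointwise_closed B \<Longrightarrow> (\<And>k. \<sigma> k \<in> B) \<Longrightarrow> (\<And>n. \<forall>\<^sub>F k in sequentially. \<sigma> k n = h n) \<Longrightarrow> h \<in> B"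
  unfolding pointwise_closed_def by blast

locale coord_embedding =
  fixes A :: "'b set" and T :: "'b \<Rightarrow> nat \<Rightarrow> 'a"
  assumes inj: "inj_on T A"
begin

sublocale Metric_space A "pullback_dist T"
  by unfold_locales
    (auto simp: pullback_dist_def coord_dist_nonneg coord_dist_commute coord_dist_eq_0_iff
      inj_on_eq_iff[OF inj] coord_dist_triangle)

lemma openin_cylinder:
  assumes "S \<in> cylinders A T"
  shows "openin mtopology S"
proof -
  obtain n c where S: "S = {f \<in> A. T f n = c}"
    using assms by (auto simp: cylinders_def)
  have "mball f (1 / 2 ^ n) \<subseteq> S" if "f \<in> S" for f
  proof
    fix g assume g: "g \<in> mball f (1 / 2 ^ n)"
    then have "T f n = T g n"
      using coord_dist_ge_if_differ by (force simp: pullback_dist_def)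
    then show "g \<in> S"
      using that g S by auto
  qed
  then show ?thesis
    unfolding openin_mtopology using S by (auto intro!: exI[of _ "1 / 2 ^ n"])
qed

lemma generate_topology_on_initial_cylinder:
  assumes "N > 0"
  shows "generate_topology_on (cylinders A T) {g \<in> A. \<forall>n<N. T g n = T f n}"
proof -
  have "{g \<in> A. \<forall>n<N. T g n = T f n} = (\<Inter>n<N. {g \<in> A. T g n = T f n})"
    using assms by auto
  also have "generate_topology_on (cylinders A T) \<dots>"
    using assms
    by (intro generate_topology_on_Inter) (auto simp: cylinders_def intro: generate_topology_on.Basis)
  finally show ?thesis .
qed

lemma initial_cylinder_subset_mball:
  assumes "f \<in> A" "r > 0"
  obtains N where "N > 0" "{g \<in> A. \<forall>n<N. T g n = T f n} \<subseteq> mball f r"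
proof -
  obtain N where "N > 0"
    and N: "\<And>u v :: nat \<Rightarrow> 'a. (\<And>n. n < N \<Longrightarrow> u n = v n) \<Longrightarrow> coord_dist u v < r"
    using coord_dist_small[OF assms(2)] by blast
  have "coord_dist (T f) (T g) < r" if "\<forall>n<N. T g n = T f n" for g
    using that by (intro N) simp
  then have "{g \<in> A. \<forall>n<N. T g n = T f n} \<subseteq> mball f r"
    using assms(1) by (auto simp: pullback_dist_def)
  with \<open>N > 0\<close> show thesis by (rule that)
qed

lemma mtopology_eq_cylinders: "mtopology = topology_generated_by (cylinders A T)"
proof (rule topology_eq[THEN iffD2], intro allI iffI)
  fix U assume U: "openin mtopology U"
  show "openin (topology_generated_by (cylinders A T)) U"
  proof (subst openin_subopen, intro ballI)
    fix f assume "f \<in> U"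
    then obtain r where "r > 0" "mball f r \<subseteq> U" "f \<in> A"
      using U unfolding openin_mtopology by blast
    moreover obtain N where "N > 0" "{g \<in> A. \<forall>n<N. T g n = T f n} \<subseteq> mball f r"
      using initial_cylinder_subset_mball[OF \<open>f \<in> A\<close> \<open>r > 0\<close>] by blast
    ultimately show "\<exists>V. openin (topology_generated_by (cylinders A T)) V \<and> f \<in> V \<and> V \<subseteq> U"
      using \<open>f \<in> A\<close> generate_topology_on_initial_cylinder[of N f]
      by (intro exI[of _ "{g \<in> A. \<forall>n<N. T g n = T f n}"]) (auto simp: openin_topology_generated_by_iff)
  qed
next
  fix U assume "openin (topology_generated_by (cylinders A T)) U"
  then show "openin mtopology U"
    unfolding openin_topology_generated_by_iff
    by (rule generate_topology_on_coarsest[rotated 2]) (use openin_cylinder in auto)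
qed

lemma MCauchy_coordinate_eventually_constant:
  assumes "MCauchy \<sigma>"
  shows "\<exists>K. \<forall>k\<ge>K. T (\<sigma> k) n = T (\<sigma> K) n"
proof -
  have "(0::real) < 1 / 2 ^ n"
    by simp
  then obtain K where K: "\<And>k k'. K \<le> k \<Longrightarrow> K \<le> k' \<Longrightarrow> pullback_dist T (\<sigma> k) (\<sigma> k') < 1 / 2 ^ n"
    using assms unfolding MCauchy_def by blast
  have "T (\<sigma> k) n = T (\<sigma> K) n" if "K \<le> k" for k
    using K[OF that order_refl] coord_dist_ge_if_differ by (force simp: pullback_dist_def)
  then show ?thesis
    by blast
qed

lemma limitin_if_coordinates_eventually_equal:
  assumes "f \<in> A" "range \<sigma> \<subseteq> A" "\<And>n. \<forall>\<^sub>F k in sequentially. T (\<sigma> k) n = T f n"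
  shows "limitin mtopology \<sigma> f sequentially"
  unfolding limitin_metric
proof (intro conjI allI impI assms(1))
  fix e :: real assume "e > 0"
  then obtain N where "N > 0"
    and N: "\<And>u v :: nat \<Rightarrow> 'a. (\<And>n. n < N \<Longrightarrow> u n = v n) \<Longrightarrow> coord_dist u v < e"
    using coord_dist_small[OF \<open>e > 0\<close>] by blast
  have "\<forall>\<^sub>F k in sequentially. \<forall>n\<in>{..<N}. T (\<sigma> k) n = T f n"
    using assms(3) by (intro eventually_ball_finite) auto
  then show "\<forall>\<^sub>F k in sequentially. \<sigma> k \<in> A \<and> pullback_dist T (\<sigma> k) f < e"
    by eventually_elim (use assms(2) N in \<open>auto simp: pullback_dist_def\<close>)
qed

lemma mcomplete_if_pointwise_closed:
  assumes "pointwise_closed (T ` A)"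
  shows mcomplete
  unfolding mcomplete_def
proof (intro allI impI)
  fix \<sigma> assume \<sigma>: "MCauchy \<sigma>"
  then have \<sigma>A: "range \<sigma> \<subseteq> A"
    by (simp add: MCauchy_def)
  have "\<forall>n. \<exists>K. \<forall>k\<ge>K. T (\<sigma> k) n = T (\<sigma> K) n"
    using MCauchy_coordinate_eventually_constant[OF \<sigma>] by (rule allI)
  then obtain K where K: "\<forall>n. \<forall>k\<ge>K n. T (\<sigma> k) n = T (\<sigma> (K n)) n"
    by (rule choice[THEN exE])
  define h where "h n = T (\<sigma> (K n)) n" for n
  have lim: "\<forall>\<^sub>F k in sequentially. T (\<sigma> k) n = h n" for n
    unfolding eventually_sequentially h_def using K by blast
  have "h \<in> T ` A"
    by (rule pointwise_closedD[OF assms, of "\<lambda>k. T (\<sigma> k)"]) (use \<sigma>A lim in auto)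
  then obtain f where "f \<in> A" "T f = h"
    by blast
  then have "limitin mtopology \<sigma> f sequentially"
    using \<sigma>A lim by (intro limitin_if_coordinates_eventually_equal) auto
  then show "\<exists>x. limitin mtopology \<sigma> x sequentially"
    by blast
qed

lemma separable_space_if_initially_dense:
  assumes "countable D" "D \<subseteq> T ` A" and dense: "\<And>u N. u \<in> T ` A \<Longrightarrow> \<exists>v\<in>D. \<forall>n<N. v n = u n"
  shows "separable_space mtopology"
proof -
  define C where "C = inv_into A T ` D"
  have "C \<subseteq> A"
    using assms(2) by (auto simp: C_def inv_into_into)
  have "\<exists>y\<in>C. y \<in> mball x r" if x: "x \<in> A" and r: "r > 0" for x r
  proof -
    obtain N where N: "{g \<in> A. \<forall>n<N. T g n = T x n} \<subseteq> mball x r"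
      using initial_cylinder_subset_mball[OF x r] by blast
    obtain v where "v \<in> D" "\<forall>n<N. v n = T x n"
      using dense \<open>x \<in> A\<close> by blast
    moreover have "inv_into A T v \<in> A" "T (inv_into A T v) = v"
      using \<open>v \<in> D\<close> assms(2) by (auto simp: inv_into_into f_inv_into_f)
    ultimately have "inv_into A T v \<in> mball x r"
      using N by auto
    then show ?thesis
      using \<open>v \<in> D\<close> by (auto simp: C_def)
  qed
  then have "mtopology closure_of C = A"
    using \<open>C \<subseteq> A\<close> unfolding metric_closure_of by auto
  then show ?thesis
    unfolding separable_space_def using \<open>C \<subseteq> A\<close> assms(1) by (auto simp: C_def)
qed

lemma Polish_space_mtopology:
  assumes "pointwise_closed (T ` A)"
    and "countable D" "D \<subseteq> T ` A" "\<And>u N. u \<in> T ` A \<Longrightarrow> \<exists>v\<in>D. \<forall>n<N. v n = u n"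
  shows "Polish_space mtopology"
  unfolding Polish_space_def completely_metrizable_space_def
  using Metric_space_axioms mcomplete_if_pointwise_closed separable_space_if_initially_dense assms
  by blast

end

lemma Inat_injD: "f \<in> Inat \<Longrightarrow> f a = Some y \<Longrightarrow> f b = Some y \<Longrightarrow> a = b"
  unfolding Inat_def by (metis domI inj_onD mem_Collect_eq)

lemma pinv_eq_Some_iff:
  assumes "f \<in> Inat"
  shows "pinv f y = Some x \<longleftrightarrow> f x = Some y"
proof -
  have "(THE x. f x = Some y) = x" if "f x = Some y" for x
    using that Inat_injD[OF assms] by (intro the_equality) auto
  then show ?thesis
    by (auto simp: pinv_def ran_def)
qed

lemma pinv_eq_None_iff: "pinv f y = None \<longleftrightarrow> y \<notin> ran f"
  by (simp add: pinv_def)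

lemma pinv_in_Inat:
  assumes "f \<in> Inat"
  shows "pinv f \<in> Inat"
  unfolding Inat_def mem_Collect_eq
proof (rule inj_onI)
  fix a b assume "a \<in> dom (pinv f)" "pinv f a = pinv f b"
  then obtain x where "pinv f a = Some x" "pinv f b = Some x"
    by (metis domD)
  then show "a = b"
    using assms by (simp add: pinv_eq_Some_iff)
qed

lemma pinv_pinv:
  assumes "f \<in> Inat"
  shows "pinv (pinv f) = f"
proof
  fix y
  show "pinv (pinv f) y = f y"
    using assms pinv_in_Inat[OF assms]
    by (cases "f y"; cases "pinv (pinv f) y") (simp_all add: pinv_eq_Some_iff pinv_eq_None_iff ran_def)
qed

lemma inj_on_pinv: "inj_on pinv Inat"
  by (metis inj_onI pinv_pinv)

lemma pinv_image_Inat: "pinv ` Inat = Inat"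
proof
  show "pinv ` Inat \<subseteq> Inat"
    using pinv_in_Inat by blast
  show "Inat \<subseteq> pinv ` Inat"
  proof
    fix f assume "f \<in> Inat"
    then have "f = pinv (pinv f)" "pinv f \<in> Inat"
      by (simp_all add: pinv_pinv pinv_in_Inat)
    then show "f \<in> pinv ` Inat"
      by blast
  qed
qed

lemma map_comp_in_Inat:
  assumes "f \<in> Inat" "g \<in> Inat"
  shows "f \<circ>\<^sub>m g \<in> Inat"
  unfolding Inat_def mem_Collect_eq
proof (rule inj_onI)
  fix a b assume "a \<in> dom (f \<circ>\<^sub>m g)" "(f \<circ>\<^sub>m g) a = (f \<circ>\<^sub>m g) b"
  then obtain y where "(f \<circ>\<^sub>m g) a = Some y" "(f \<circ>\<^sub>m g) b = Some y"
    by (metis domD)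
  then obtain m m' where "g a = Some m" "g b = Some m'" "f m = Some y" "f m' = Some y"
    by (auto simp: map_comp_Some_iff)
  then show "a = b"
    using Inat_injD[OF assms(1)] Inat_injD[OF assms(2)] by metis
qed

lemma pointwise_closed_Inat: "pointwise_closed Inat"
  unfolding pointwise_closed_def
proof (intro allI impI)
  fix \<sigma> h assume \<sigma>: "\<forall>k. \<sigma> k \<in> Inat" and lim: "\<forall>n. \<forall>\<^sub>F k in sequentially. \<sigma> k n = h n"
  show "h \<in> Inat"
    unfolding Inat_def mem_Collect_eq
  proof (rule inj_onI)
    fix a b assume "a \<in> dom h" "h a = h b"
    then obtain y where y: "h a = Some y" "h b = Some y"
      by (metis domD)
    have "\<forall>\<^sub>F k in sequentially. \<sigma> k a = h a \<and> \<sigma> k b = h b"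
      using lim by (simp add: eventually_conj)
    then obtain k where "\<sigma> k a = h a" "\<sigma> k b = h b"
      unfolding eventually_sequentially by blast
    with y have "\<sigma> k a = Some y" "\<sigma> k b = Some y"
      by simp_all
    then show "a = b"
      using \<sigma> Inat_injD by blast
  qed
qed

lemma countable_initially_dense_subset_Inat:
  "\<exists>D. countable D \<and> D \<subseteq> Inat \<and> (\<forall>f\<in>Inat. \<forall>N. \<exists>g\<in>D. \<forall>n<N. g n = f n)"
proof -
  define D where "D = Inat \<inter> range (\<lambda>xs n. if n < length xs then xs ! n else None)"
  have restrict_in_D: "f |` {..<N} \<in> D" if "f \<in> Inat" for f N
  proof -
    have "f |` {..<N} = (\<lambda>n. if n < length (map f [0..<N]) then map f [0..<N] ! n else None)"
      by (auto simp: restrict_map_def fun_eq_iff)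
    moreover have "f |` {..<N} \<in> Inat"
      using that by (auto simp: Inat_def restrict_map_def inj_on_def domIff split: if_splits)
    ultimately show ?thesis
      unfolding D_def by blast
  qed
  show ?thesis
  proof (intro exI[of _ D] conjI ballI allI)
    show "countable D"
      unfolding D_def by (intro countable_Int2) simp
    show "D \<subseteq> Inat"
      by (simp add: D_def)
    fix f N assume "f \<in> Inat"
    then show "\<exists>g\<in>D. \<forall>n<N. g n = f n"
      using restrict_in_D by (intro bexI[of _ "f |` {..<N}"]) auto
  qed
qed

lemma cylinders_id: "cylinders Inat id = {vset x y | x y. True} \<union> {w1set x | x. True}"
proof -
  have "{f \<in> Inat. id f x = c} = (case c of None \<Rightarrow> w1set x | Some y \<Rightarrow> vset x y)" for x c
    by (cases c) (auto simp: vset_def w1set_def)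
  then show ?thesis
    unfolding cylinders_def by (auto split: option.splits) metis+
qed

lemma cylinders_pinv: "cylinders Inat pinv = {vset x y | x y. True} \<union> {w2set y | y. True}"
proof -
  have "{f \<in> Inat. pinv f y = c} = (case c of None \<Rightarrow> w2set y | Some x \<Rightarrow> vset x y)" for y c
    by (cases c) (auto simp: vset_def w2set_def pinv_eq_Some_iff pinv_eq_None_iff)
  then show ?thesis
    unfolding cylinders_def by (auto split: option.splits) metis+
qed

lemma acoef_add_bcoef: "acoef f g n + bcoef f g n = (if f n = g n then 0 else 1)"
  by (cases "f n"; cases "g n") (auto simp: acoef_def bcoef_def domIff)

lemma rho_eq_pullback_dist: "rho = pullback_dist id"
  by (simp add: fun_eq_iff rho_def pullback_dist_def coord_dist_def coord_diff_def acoef_add_bcoef)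

lemma rho_star_eq_pullback_dist: "rho_star = pullback_dist pinv"
  by (simp add: fun_eq_iff rho_star_def rho_eq_pullback_dist pullback_dist_def)

lemma tau1_metrized_by_rho:
  "topspace tau1 = Inat \<and> Polish_space tau1 \<and> Metric_space Inat rho
     \<and> Metric_space.mcomplete Inat rho \<and> Metric_space.mtopology Inat rho = tau1"
proof -
  interpret coord_embedding Inat id
    by unfold_locales simp
  obtain D where "countable D" "D \<subseteq> Inat" "\<forall>f\<in>Inat. \<forall>N. \<exists>g\<in>D. \<forall>n<N. g n = f n"
    using countable_initially_dense_subset_Inat by blast
  then have "Polish_space mtopology"
    using pointwise_closed_Inat by (intro Polish_space_mtopology[of D]) auto
  moreover have mcomplete
    using pointwise_closed_Inat by (intro mcomplete_if_pointwise_closed) simp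
  moreover have "mtopology = tau1"
    unfolding mtopology_eq_cylinders tau1_def cylinders_id ..
  ultimately show ?thesis
    using Metric_space_axioms topspace_mtopology by (auto simp: rho_eq_pullback_dist)
qed

lemma tau2_metrized_by_rho_star:
  "topspace tau2 = Inat \<and> Polish_space tau2 \<and> Metric_space Inat rho_star
     \<and> Metric_space.mcomplete Inat rho_star \<and> Metric_space.mtopology Inat rho_star = tau2"
proof -
  interpret coord_embedding Inat pinv
    by unfold_locales (rule inj_on_pinv)
  obtain D where "countable D" "D \<subseteq> Inat" "\<forall>f\<in>Inat. \<forall>N. \<exists>g\<in>D. \<forall>n<N. g n = f n"
    using countable_initially_dense_subset_Inat by blast
  then have "Polish_space mtopology"
    using pointwise_closed_Inat by (intro Polish_space_mtopology[of D]) (auto simp: pinv_image_Inat)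
  moreover have mcomplete
    using pointwise_closed_Inat by (intro mcomplete_if_pointwise_closed) (simp add: pinv_image_Inat)
  moreover have "mtopology = tau2"
    unfolding mtopology_eq_cylinders tau2_def cylinders_pinv ..
  ultimately show ?thesis
    using Metric_space_axioms topspace_mtopology by (auto simp: rho_star_eq_pullback_dist)
qed

lemma topological_semigroup_generated_by:
  assumes "\<And>a b c. m (m a b) c = m a (m b c)" and "\<Union>S = A"
    and "\<And>a b. a \<in> A \<Longrightarrow> b \<in> A \<Longrightarrow> m a b \<in> A"
    and "\<And>U. U \<in> S \<Longrightarrow> openin (prod_topology (topology_generated_by S) (topology_generated_by S))
                                 ((\<lambda>(a, b). m a b) -` U \<inter> (A \<times> A))"
  shows "topological_semigroup (topology_generated_by S) m"
  unfolding topological_semigroup_def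
  using assms by (auto intro!: continuous_on_generated_topo)

lemma map_comp_assoc: "(f \<circ>\<^sub>m g) \<circ>\<^sub>m h = f \<circ>\<^sub>m (g \<circ>\<^sub>m h)"
  by (auto simp: map_comp_def fun_eq_iff split: option.splits)

lemma map_comp_preimage_vset:
  "(\<lambda>(f, g). f \<circ>\<^sub>m g) -` vset x y \<inter> (Inat \<times> Inat) = (\<Union>m. vset m y \<times> vset x m)"
  by (auto simp: vset_def map_comp_Some_iff map_comp_in_Inat)

lemma map_comp_preimage_w1set:
  "(\<lambda>(f, g). f \<circ>\<^sub>m g) -` w1set x \<inter> (Inat \<times> Inat) = (Inat \<times> w1set x) \<union> (\<Union>m. w1set m \<times> vset x m)"
  by (auto simp: vset_def w1set_def map_comp_None_iff map_comp_in_Inat domIff) (metis option.simps(3))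

lemma map_comp_preimage_w2set:
  "(\<lambda>(f, g). f \<circ>\<^sub>m g) -` w2set y \<inter> (Inat \<times> Inat) = (w2set y \<times> Inat) \<union> (\<Union>m. vset m y \<times> w2set m)"
  by (auto simp: vset_def w2set_def ran_def map_comp_Some_iff map_comp_in_Inat) (metis Inat_injD)

lemma openin_prod_topology_UN_Times:
  "(\<And>m. openin X (A m)) \<Longrightarrow> (\<And>m. openin Y (B m)) \<Longrightarrow> openin (prod_topology X Y) (\<Union>m. A m \<times> B m)"
  by (rule openin_Union) (auto simp: openin_prod_Times_iff)

lemma topological_semigroup_tau1: "topological_semigroup tau1 (\<circ>\<^sub>m)"
proof -
  let ?S = "{vset x y | x y. True} \<union> {w1set x | x. True}"
  have top: "topspace tau1 = Inat"
    using tau1_metrized_by_rho by blast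
  then have carrier: "\<Union>?S = Inat"
    unfolding tau1_def topology_generated_by_topspace .
  have "openin tau1 U" if "U \<in> ?S" for U
    unfolding tau1_def using that by (rule topology_generated_by_Basis)
  then have v: "openin tau1 (vset x y)" and w: "openin tau1 (w1set x)" for x y
    by blast+
  have "openin tau1 Inat"
    using top by (metis openin_topspace)
  have preimage_open: "openin (prod_topology tau1 tau1) ((\<lambda>(f, g). f \<circ>\<^sub>m g) -` U \<inter> (Inat \<times> Inat))"
    if "U \<in> ?S" for U
  proof -
    from that consider x y where "U = vset x y" | x where "U = w1set x"
      by blast
    then show ?thesis
      by cases (auto simp: map_comp_preimage_vset map_comp_preimage_w1set openin_prod_Times_iff v w
                     \<open>openin tau1 Inat\<close> intro!: openin_prod_topology_UN_Times)
  qed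
  show ?thesis
    using topological_semigroup_generated_by[OF map_comp_assoc carrier map_comp_in_Inat
        preimage_open[unfolded tau1_def]]
    unfolding tau1_def .
qed

lemma topological_semigroup_tau2: "topological_semigroup tau2 (\<circ>\<^sub>m)"
proof -
  let ?S = "{vset x y | x y. True} \<union> {w2set y | y. True}"
  have top: "topspace tau2 = Inat"
    using tau2_metrized_by_rho_star by blast
  then have carrier: "\<Union>?S = Inat"
    unfolding tau2_def topology_generated_by_topspace .
  have "openin tau2 U" if "U \<in> ?S" for U
    unfolding tau2_def using that by (rule topology_generated_by_Basis)
  then have v: "openin tau2 (vset x y)" and w: "openin tau2 (w2set y)" for x y
    by blast+
  have "openin tau2 Inat"
    using top by (metis openin_topspace)
  have preimage_open: "openin (prod_topology tau2 tau2) ((\<lambda>(f, g). f \<circ>\<^sub>m g) -` U \<inter> (Inat \<times> Inat))"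
    if "U \<in> ?S" for U
  proof -
    from that consider x y where "U = vset x y" | y where "U = w2set y"
      by blast
    then show ?thesis
      by cases (auto simp: map_comp_preimage_vset map_comp_preimage_w2set openin_prod_Times_iff v w
                     \<open>openin tau2 Inat\<close> intro!: openin_prod_topology_UN_Times)
  qed
  show ?thesis
    using topological_semigroup_generated_by[OF map_comp_assoc carrier map_comp_in_Inat
        preimage_open[unfolded tau2_def]]
    unfolding tau2_def .
qed

theorem theorem4p3:
  shows "(topspace tau1 = Inat \<and> Polish_space tau1 \<and> topological_semigroup tau1 (\<circ>\<^sub>m)
           \<and> Metric_space Inat rho \<and> Metric_space.mcomplete Inat rho
           \<and> Metric_space.mtopology Inat rho = tau1)
       \<and> (topspace tau2 = Inat \<and> Polish_space tau2 \<and> topological_semigroup tau2 (\<circ>\<^sub>m)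
           \<and> Metric_space Inat rho_star \<and> Metric_space.mcomplete Inat rho_star
           \<and> Metric_space.mtopology Inat rho_star = tau2)"
  using tau1_metrized_by_rho tau2_metrized_by_rho_star topological_semigroup_tau1 topological_semigroup_tau2
  by blast

end
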